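(* There is a function $f$ on the natural numbers such that, for every finite group $G$, $\omega(\mathrm{EPow}(G))\leqslant f(\omega(\mathrm{Pow}(G)))$.
   Context: $\omega$ denotes clique number. $\mathrm{Pow}(G)$ is the graph on $G$ in which distinct $x,y$ are adjacent iff one is a power of the other; $\mathrm{EPow}(G)$ is the graph on $G$ in which distinct $x,y$ are adjacent iff $\langle x,y\rangle$ is cyclic. *)

theory Defs
  imports "HOL-Algebra.Elementary_Groups"
begin

definition is_clique :: "'a set \<Rightarrow> ('a \<Rightarrow> 'a \<Rightarrow> bool) \<Rightarrow> 'a set \<Rightarrow> bool" where
  "is_clique V E S \<longleftrightarrow> S \<subseteq> V \<and> (\<forall>x\<in>S. \<forall>y\<in>S. x \<noteq> y \<longrightarrow> E x y)"

definition clique_number :: "'a set \<Rightarrow> ('a \<Rightarrow> 'a \<Rightarrow> bool) \<Rightarrow> nat" where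
  "clique_number V E = Max (card ` {S. is_clique V E S})"

definition pow_adj :: "('a, 'b) monoid_scheme \<Rightarrow> 'a \<Rightarrow> 'a \<Rightarrow> bool" where
  "pow_adj G x y \<longleftrightarrow> x \<noteq> y \<and>
     ((\<exists>n::nat. y = x [^]\<^bsub>G\<^esub> n) \<or> (\<exists>n::nat. x = y [^]\<^bsub>G\<^esub> n))"

definition epow_adj :: "('a, 'b) monoid_scheme \<Rightarrow> 'a \<Rightarrow> 'a \<Rightarrow> bool" where
  "epow_adj G x y \<longleftrightarrow> x \<noteq> y \<and> cyclic_group (subgroup_generated G {x, y})"

end

(* If x has order n, the totient(n) generators of the cyclic group generated by x are
   pairwise powers of each other, so totient(n) <= k := omega(Pow G). A prime power p^a
   dividing n contributes p^(a-1)(p-1) <= k, hence p <= k + 1 and a <= k, so n divides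
   ((k+1)!)^k. In a clique of EPow G, two elements x, y of the same order d generate a
   cyclic group; there the d powers of y already exhaust the at most d solutions of
   u^d = 1, so x is a power of y and the clique has at most d elements of order d.
   Summing over the orders d <= ((k+1)!)^k bounds omega(EPow G). *)

theory Submission
  imports Defs "HOL-Algebra.Multiplicative_Group" "HOL-Number_Theory.Totient"
begin

lemma finite_cliques:
  assumes "finite V"
  shows "finite {S. is_clique V E S}"
proof -
  have "{S. is_clique V E S} \<subseteq> Pow V"
    by (auto simp: is_clique_def)
  then show ?thesis
    using assms by (simp add: finite_subset)
qed

lemma clique_number_ge:
  assumes "finite V" "is_clique V E S"
  shows "card S \<le> clique_number V E"
  unfolding clique_number_def using finite_cliques[OF assms(1)] assms(2) by (intro Max_ge) auto

lemma clique_number_attained: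
  assumes "finite V"
  obtains S where "is_clique V E S" "card S = clique_number V E"
proof -
  have "is_clique V E {}"
    by (simp add: is_clique_def)
  then have "clique_number V E \<in> card ` {S. is_clique V E S}"
    unfolding clique_number_def using finite_cliques[OF assms] by (intro Max_in) auto
  with that show ?thesis
    by auto
qed

lemma dvd_fact_power_totient:
  fixes n :: nat
  assumes "n > 0"
  shows "n dvd fact (totient n + 1) ^ totient n"
proof (rule multiplicity_le_imp_dvd)
  show "n \<noteq> 0" using assms by simp
  fix p :: nat
  assume p: "prime p"
  define t where "t = totient n"
  show "multiplicity p n \<le> multiplicity p (fact (totient n + 1) ^ totient n)"
  proof (cases "multiplicity p n")
    case (Suc a)
    have "p ^ Suc a dvd n"
      using multiplicity_dvd[of p n] Suc by simp
    then have "totient (p ^ Suc a) \<le> t"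
      unfolding t_def using assms by (rule totient_dvd_mono)
    then have bound: "p ^ a * (p - 1) \<le> t"
      by (simp only: totient_prime_power_Suc[OF p])
    have "p ^ a \<ge> 1" "p - 1 \<ge> 1"
      using prime_ge_2_nat[OF p] by simp_all
    then have "p - 1 \<le> p ^ a * (p - 1)" "p ^ a \<le> p ^ a * (p - 1)"
      by simp_all
    then have "p - 1 \<le> t" "p ^ a \<le> t"
      using bound by linarith+
    moreover have "a < 2 ^ a" "(2::nat) ^ a \<le> p ^ a"
      using prime_ge_2_nat[OF p] by (simp_all add: less_exp power_mono)
    ultimately have "p \<le> t + 1" "Suc a \<le> t"
      by linarith+
    have "p dvd fact (t + 1)"
      using \<open>p \<le> t + 1\<close> prime_gt_0_nat[OF p] by (intro dvd_fact) auto
    then have "p ^ t dvd fact (t + 1) ^ t"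
      by (rule dvd_power_same)
    with \<open>Suc a \<le> t\<close> have "p ^ Suc a dvd fact (t + 1) ^ t"
      by (meson dvd_trans le_imp_power_dvd)
    then have "Suc a \<le> multiplicity p (fact (t + 1) ^ t)"
      using p by (intro multiplicity_geI) (auto simp: not_prime_unit)
    then show ?thesis
      using Suc by (simp add: t_def)
  qed simp
qed

lemma le_fact_power_if_totient_le:
  fixes n :: nat
  assumes "n > 0" "totient n \<le> k"
  shows "n \<le> fact (k + 1) ^ k"
proof -
  have "n \<le> fact (totient n + 1) ^ totient n"
    using dvd_fact_power_totient[OF assms(1)] by (simp add: dvd_imp_le)
  also have "\<dots> \<le> fact (k + 1) ^ totient n"
    using assms(2) by (intro power_mono fact_mono) auto
  also have "\<dots> \<le> fact (k + 1) ^ k"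
    using assms(2) by (intro power_increasing) (auto simp: Suc_le_eq)
  finally show ?thesis .
qed

context group
begin

lemma pow_mod_ord:
  assumes "x \<in> carrier G"
  shows "x [^] (n mod ord x) = x [^] n"
proof -
  have "x [^] n = x [^] (n mod ord x + ord x * (n div ord x))"
    by simp
  also have "\<dots> = x [^] (n mod ord x) \<otimes> (x [^] ord x) [^] (n div ord x)"
    by (simp only: nat_pow_mult[OF assms] nat_pow_pow[OF assms])
  also have "\<dots> = x [^] (n mod ord x)"
    using assms by simp
  finally show ?thesis by (rule sym)
qed

lemma pow_in_powers_of_coprime_pow:
  fixes i j :: nat
  assumes x: "x \<in> carrier G" and "coprime i (ord x)"
  shows "\<exists>n::nat. x [^] j = (x [^] i) [^] n"
proof -
  obtain u where "[i * u = 1] (mod ord x)"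
    using cong_solve_coprime_nat assms(2) by auto
  then have "(i * u * j) mod ord x = j mod ord x"
    unfolding cong_def by (metis mod_mult_left_eq mult_1)
  then have "(x [^] i) [^] (u * j) = x [^] j"
    using x by (metis mult.assoc nat_pow_pow pow_mod_ord)
  then show ?thesis by metis
qed

lemma totient_ord_le_clique_number_pow:
  assumes fin: "finite (carrier G)" and x: "x \<in> carrier G"
  shows "totient (ord x) \<le> clique_number (carrier G) (pow_adj G)"
proof -
  let ?S = "(\<lambda>i. x [^] i) ` totatives (ord x)"
  have "inj_on (\<lambda>i. x [^] i) (totatives (ord x))"
    using ord_inj'[OF x] by (rule inj_on_subset) (auto simp: in_totatives_iff)
  then have "card ?S = totient (ord x)"
    by (simp add: card_image totient_def)
  moreover have "is_clique (carrier G) (pow_adj G) ?S"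
    using x pow_in_powers_of_coprime_pow[OF x]
    by (fastforce simp: is_clique_def pow_adj_def in_totatives_iff)
  ultimately show ?thesis
    using clique_number_ge[OF fin] by metis
qed

lemma finite_cyclic_group_nat_pow_generator:
  assumes "cyclic_group G" "finite (carrier G)"
  obtains g where "g \<in> carrier G" "carrier G = range (\<lambda>k::nat. g [^] k)"
proof -
  obtain g where g: "g \<in> carrier G" "subgroup_generated G {g} = G"
    using assms(1) unfolding cyclic_group_def by blast
  then have "carrier G = generate G {g}"
    by (metis carrier_subgroup_generated inf.absorb2 insert_subset empty_subsetI)
  also have "\<dots> = {g [^] k | k. k \<in> (UNIV :: nat set)}"
    using assms(2) g(1) by (rule generate_pow_on_finite_carrier)
  finally show ?thesis
    using that[OF g(1)] by auto
qed

lemma card_roots_le_if_cyclic: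
  assumes cyc: "cyclic_group G" and fin: "finite (carrier G)" and "d > 0"
  shows "card {u \<in> carrier G. u [^] d = \<one>} \<le> d"
proof -
  obtain g where g: "g \<in> carrier G" "carrier G = range (\<lambda>k::nat. g [^] k)"
    using finite_cyclic_group_nat_pow_generator[OF cyc fin] .
  define m where "m = ord g"
  have "m > 0"
    using ord_ge_1[OF fin g(1)] by (simp add: m_def)
  have "{u \<in> carrier G. u [^] d = \<one>} \<subseteq> (\<lambda>t. g [^] (m * t div d)) ` {..<d}"
    \<comment> \<open>g^a is a root iff m divides a d, i.e. a mod m = m t / d for some t < d\<close>
  proof
    fix u
    assume "u \<in> {u \<in> carrier G. u [^] d = \<one>}"
    then obtain a :: nat where u: "u = g [^] a" and "u [^] d = \<one>"
      using g(2) by auto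
    define r where "r = a mod m"
    have "g [^] r = u"
      unfolding u r_def m_def by (rule pow_mod_ord[OF g(1)])
    have "g [^] (r * d) = u [^] d"
      using g(1) \<open>g [^] r = u\<close> by (simp flip: nat_pow_pow)
    then have "g [^] (r * d) = \<one>"
      using \<open>u [^] d = \<one>\<close> by simp
    then obtain t where t: "r * d = m * t"
      using pow_eq_id[OF g(1)] unfolding m_def by blast
    have "r < m"
      using \<open>m > 0\<close> by (simp add: r_def)
    then have "m * t < m * d"
      using \<open>d > 0\<close> t by (metis mult.commute mult_less_mono2)
    then have "t < d"
      by simp
    moreover have "r = m * t div d"
      using \<open>d > 0\<close> by (simp add: t[symmetric])
    ultimately show "u \<in> (\<lambda>t. g [^] (m * t div d)) ` {..<d}"
      using \<open>g [^] r = u\<close> by blast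
  qed
  then have "card {u \<in> carrier G. u [^] d = \<one>} \<le> card ((\<lambda>t. g [^] (m * t div d)) ` {..<d})"
    by (intro card_mono) auto
  also have "\<dots> \<le> d"
    using card_image_le[of "{..<d}"] by simp
  finally show ?thesis .
qed

lemma mem_powers_if_same_ord_and_cyclic:
  assumes fin: "finite (carrier G)" and x: "x \<in> carrier G" and y: "y \<in> carrier G"
    and cyc: "cyclic_group (subgroup_generated G {x, y})" and "ord x = ord y"
  shows "x \<in> (\<lambda>j. y [^] j) ` {..<ord y}"
proof -
  let ?H = "subgroup_generated G {x, y}"
  let ?R = "{u \<in> carrier ?H. u [^] ord y = \<one>}"
  let ?Y = "(\<lambda>j. y [^] j) ` {..<ord y}"
  interpret H: group ?H
    by (rule group_subgroup_generated)
  have "finite (carrier ?H)"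
    using fin carrier_subgroup_generated_subset finite_subset by blast
  have xy_in_H: "x \<in> carrier ?H" "y \<in> carrier ?H"
    unfolding carrier_subgroup_generated using x y by (auto intro: generate.incl)
  have card_R: "card ?R \<le> ord y"
    using H.card_roots_le_if_cyclic[OF cyc \<open>finite (carrier ?H)\<close>] ord_ge_1[OF fin y]
    by (simp add: pow_subgroup_generated)
  have Y_sub_R: "?Y \<subseteq> ?R"
  proof
    fix u
    assume "u \<in> ?Y"
    then obtain j :: nat where u: "u = y [^] j"
      by blast
    have "u \<in> carrier ?H"
      using H.nat_pow_closed[OF xy_in_H(2), of j] by (simp add: u pow_subgroup_generated)
    moreover have "u [^] ord y = \<one>"
      using y by (simp add: u nat_pow_pow pow_eq_id)
    ultimately show "u \<in> ?R"
      by blast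
  qed
  have "{0..ord y - 1} = {..<ord y}"
    using ord_ge_1[OF fin y] by auto
  then have card_Y: "card ?Y = ord y"
    using ord_inj[OF y] by (simp add: card_image)
  have "finite ?R"
    using \<open>finite (carrier ?H)\<close> by simp
  then have "?Y = ?R"
    using card_seteq[OF _ Y_sub_R] card_R card_Y by simp
  moreover have "x \<in> ?R"
    using xy_in_H(1) pow_ord_eq_1[OF x] \<open>ord x = ord y\<close> by simp
  ultimately show ?thesis
    by blast
qed

lemma card_same_ord_in_epow_clique_le:
  assumes fin: "finite (carrier G)" and S: "is_clique (carrier G) (epow_adj G) S"
  shows "card {x \<in> S. ord x = d} \<le> d"
proof (cases "\<exists>y\<in>S. ord y = d")
  case True
  then obtain y where "y \<in> S" "ord y = d"
    by blast
  have "{x \<in> S. ord x = d} \<subseteq> (\<lambda>j. y [^] j) ` {..<ord y}"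
  proof
    fix x
    assume x: "x \<in> {x \<in> S. ord x = d}"
    have "cyclic_group (subgroup_generated G {x, y})"
    proof (cases "x = y")
      case True
      then show ?thesis
        using cyclic_group_generated by simp
    next
      case False
      then show ?thesis
        using S x \<open>y \<in> S\<close> by (auto simp: is_clique_def epow_adj_def)
    qed
    then show "x \<in> (\<lambda>j. y [^] j) ` {..<ord y}"
      using mem_powers_if_same_ord_and_cyclic[OF fin] S x \<open>y \<in> S\<close> \<open>ord y = d\<close>
      by (auto simp: is_clique_def)
  qed
  then have "card {x \<in> S. ord x = d} \<le> card ((\<lambda>j. y [^] j) ` {..<ord y})"
    by (intro card_mono) auto
  also have "\<dots> \<le> d"
    using card_image_le[of "{..<ord y}"] \<open>ord y = d\<close> by simp
  finally show ?thesis .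
next
  case False
  then have "{x \<in> S. ord x = d} = {}"
    by blast
  then show ?thesis
    by (simp only: card.empty le0)
qed

lemma clique_number_epow_le:
  assumes fin: "finite (carrier G)" and ord_le: "\<forall>x\<in>carrier G. ord x \<le> M"
  shows "clique_number (carrier G) (epow_adj G) \<le> M * M"
proof -
  obtain S where S: "is_clique (carrier G) (epow_adj G) S"
    and card_S: "card S = clique_number (carrier G) (epow_adj G)"
    using clique_number_attained[OF fin] .
  have "S \<subseteq> carrier G"
    using S by (simp add: is_clique_def)
  then have "ord x \<in> {1..M}" if "x \<in> S" for x
    using that ord_le ord_ge_1[OF fin] by auto
  then have "S = (\<Union>d\<in>{1..M}. {x \<in> S. ord x = d})"
    by blast
  then have "card S = card (\<Union>d\<in>{1..M}. {x \<in> S. ord x = d})"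
    by (rule arg_cong)
  also have "\<dots> \<le> (\<Sum>d\<in>{1..M}. card {x \<in> S. ord x = d})"
    by (rule card_UN_le) simp
  also have "\<dots> \<le> (\<Sum>d\<in>{1..M}. M)"
  proof (rule sum_mono)
    fix d
    assume "d \<in> {1..M}"
    then show "card {x \<in> S. ord x = d} \<le> M"
      using card_same_ord_in_epow_clique_le[OF fin S, of d] by simp
  qed
  also have "\<dots> = M * M"
    by simp
  finally show ?thesis
    using card_S by simp
qed

end

theorem theorem4p2:
  "\<exists>f :: nat \<Rightarrow> nat. \<forall>G :: ('a, 'b) monoid_scheme.
     group G \<and> finite (carrier G) \<longrightarrow>
     clique_number (carrier G) (epow_adj G) \<le> f (clique_number (carrier G) (pow_adj G))"
proof (intro exI[of _ "\<lambda>k. fact (k + 1) ^ k * fact (k + 1) ^ k"] allI impI)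
  fix G :: "('a, 'b) monoid_scheme"
  assume G: "group G \<and> finite (carrier G)"
  interpret group G
    using G by blast
  have fin: "finite (carrier G)"
    using G by blast
  let ?k = "clique_number (carrier G) (pow_adj G)"
  have "ord x \<le> fact (?k + 1) ^ ?k" if "x \<in> carrier G" for x
    using ord_ge_1[OF fin that] totient_ord_le_clique_number_pow[OF fin that]
    by (intro le_fact_power_if_totient_le) auto
  then show "clique_number (carrier G) (epow_adj G) \<le> fact (?k + 1) ^ ?k * fact (?k + 1) ^ ?k"
    using clique_number_epow_le[OF fin] by blast
qed

end
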